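(* Let $\mathcal M=(W,W_\bot,\preccurlyeq,\sqsubseteq,V)$ be a bi-intuitionistic model, $\Sigma$ a finite set of formulas closed under subformulas, and $\approx$ a strong $\Sigma$-bisimulation on $\mathcal M$ which is also an equivalence relation. If $\sqsubseteq$ is downward confluent in $\mathcal M$, then $\sqsubseteq/{\approx}$ is downward confluent in $\mathcal M/{\approx}$.
   Context: Formulas: $p\mid\bot\mid\varphi\wedge\psi\mid\varphi\vee\psi\mid\varphi\to\psi\mid\Diamond\varphi\mid\Box\varphi$ over a countably infinite set $\mathbb P$. A bi-intuitionistic model $(W,W_\bot,\preccurlyeq,\sqsubseteq,V)$: $\preccurlyeq,\sqsubseteq$ preorders on $W$, $W_\bot$ upward closed under both, $V:\mathbb P\to2^W$ with $V(p)$ $\preccurlyeq$-upward closed and $\supseteq W_\bot$. Satisfaction: $p$ iff $w\in V(p)$; $\bot$ iff $w\in W_\bot$; $\wedge,\vee$ pointwise; $w\models\varphi\to\psi$ iff for all $v\succcurlyeq w$, $v\models\varphi$ implies $v\models\psi$; $w\models\Diamond\varphi$ iff for all $u\succcurlyeq w$ there is $v\sqsupseteq u$ with $v\models\varphi$; $w\models\Box\varphi$ iff $v\models\varphi$ whenever $w\preccurlyeq u\sqsubseteq v$. For $R\subseteq W\times W$ (relative to $\preccurlyeq$): forward confluent if $w\preccurlyeq w'$, $wRv$ imply some $v'$ with $v\preccurlyeq v'$, $w'Rv'$; backward confluent if $wRv\preccurlyeq v'$ implies some $w'$ with $w\preccurlyeq w'Rv'$; downward confluent if $w\preccurlyeq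 vRv'$ implies some $w'$ with $wRw'\preccurlyeq v'$. The $\Sigma$-label of $w$ is $\ell(w)=(\ell^+(w);\ell^\Diamond(w))$ with $\ell^+(w)=\{\varphi\in\Sigma:(\mathcal M,w)\models\varphi\}$, $\ell^\Diamond(w)=\{\varphi\in\Sigma:\forall v\sqsupseteq w,\ (\mathcal M,v)\not\models\varphi\}$. A $\Sigma$-bisimulation is a forward and backward confluent $Z$ with $wZv\Rightarrow\ell(w)=\ell(v)$; a strong $\Sigma$-bisimulation is a $\Sigma$-bisimulation $Z$ such that $Z$ and $Z^{-1}$ are downward confluent. For an equivalence relation $\approx$ on $W$ with classes $[w]$, the quotient $\mathcal M/{\approx}$ has worlds $\{[w]\}$, fallible worlds $\{[w]:w\in W_\bot\}$, $[w]\,(\preccurlyeq/{\approx})\,[v]$ iff there are $w'\approx w$, $v'\approx v$ with $w'\preccurlyeq v'$; $\sqsubseteq/{\approx}$ is the transitive closure of the relation given by $[w]\,R\,[v]$ iff there are $w',v'$ with $w\approx w'\sqsubseteq v'\approx v$; and $[w]\in (V/{\approx})(p)$ iff some $w'\approx w$ lies in $V(p)$. *)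

theory Defs
  imports Main
begin

datatype fm = Atom nat | Bot | And fm fm | Or fm fm | Imp fm fm | Dia fm | Box fm

primrec subfms :: "fm \<Rightarrow> fm set" where
  "subfms (Atom p) = {Atom p}"
| "subfms Bot = {Bot}"
| "subfms (And a b) = insert (And a b) (subfms a \<union> subfms b)"
| "subfms (Or a b) = insert (Or a b) (subfms a \<union> subfms b)"
| "subfms (Imp a b) = insert (Imp a b) (subfms a \<union> subfms b)"
| "subfms (Dia a) = insert (Dia a) (subfms a)"
| "subfms (Box a) = insert (Box a) (subfms a)"

definition sub_closed :: "fm set \<Rightarrow> bool" where
  "sub_closed S \<longleftrightarrow> (\<forall>\<phi>\<in>S. subfms \<phi> \<subseteq> S)"

record 'w model =
  W :: "'w set"
  Wb :: "'w set"
  le :: "'w rel"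
  sq :: "'w rel"
  V :: "nat \<Rightarrow> 'w set"

definition preorder_on :: "'w set \<Rightarrow> 'w rel \<Rightarrow> bool" where
  "preorder_on A R \<longleftrightarrow> R \<subseteq> A \<times> A \<and> refl_on A R \<and> trans R"

definition up_closed :: "'w rel \<Rightarrow> 'w set \<Rightarrow> bool" where
  "up_closed R X \<longleftrightarrow> (\<forall>w v. w \<in> X \<and> (w, v) \<in> R \<longrightarrow> v \<in> X)"

definition bi_model :: "'w model \<Rightarrow> bool" where
  "bi_model M \<longleftrightarrow> preorder_on (W M) (le M) \<and> preorder_on (W M) (sq M)
     \<and> Wb M \<subseteq> W M \<and> up_closed (le M) (Wb M) \<and> up_closed (sq M) (Wb M)
     \<and> (\<forall>p. V M p \<subseteq> W M \<and> up_closed (le M) (V M p) \<and> Wb M \<subseteq> V M p)"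

primrec sat :: "'w model \<Rightarrow> 'w \<Rightarrow> fm \<Rightarrow> bool" where
  "sat M w (Atom p) \<longleftrightarrow> w \<in> V M p"
| "sat M w Bot \<longleftrightarrow> w \<in> Wb M"
| "sat M w (And a b) \<longleftrightarrow> sat M w a \<and> sat M w b"
| "sat M w (Or a b) \<longleftrightarrow> sat M w a \<or> sat M w b"
| "sat M w (Imp a b) \<longleftrightarrow> (\<forall>v. (w, v) \<in> le M \<longrightarrow> sat M v a \<longrightarrow> sat M v b)"
| "sat M w (Dia a) \<longleftrightarrow> (\<forall>u. (w, u) \<in> le M \<longrightarrow> (\<exists>v. (u, v) \<in> sq M \<and> sat M v a))"
| "sat M w (Box a) \<longleftrightarrow> (\<forall>u v. (w, u) \<in> le M \<longrightarrow> (u, v) \<in> sq M \<longrightarrow> sat M v a)"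

definition label_plus :: "'w model \<Rightarrow> fm set \<Rightarrow> 'w \<Rightarrow> fm set" where
  "label_plus M S w = {\<phi> \<in> S. sat M w \<phi>}"

definition label_dia :: "'w model \<Rightarrow> fm set \<Rightarrow> 'w \<Rightarrow> fm set" where
  "label_dia M S w = {\<phi> \<in> S. \<forall>v. (w, v) \<in> sq M \<longrightarrow> \<not> sat M v \<phi>}"

definition label :: "'w model \<Rightarrow> fm set \<Rightarrow> 'w \<Rightarrow> fm set \<times> fm set" where
  "label M S w = (label_plus M S w, label_dia M S w)"

definition forward_confluent :: "'w rel \<Rightarrow> 'w rel \<Rightarrow> bool" where
  "forward_confluent P R \<longleftrightarrow>
     (\<forall>w w' v. (w, w') \<in> P \<and> (w, v) \<in> R \<longrightarrow> (\<exists>v'. (v, v') \<in> P \<and> (w', v') \<in> R))"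

definition backward_confluent :: "'w rel \<Rightarrow> 'w rel \<Rightarrow> bool" where
  "backward_confluent P R \<longleftrightarrow>
     (\<forall>w v v'. (w, v) \<in> R \<and> (v, v') \<in> P \<longrightarrow> (\<exists>w'. (w, w') \<in> P \<and> (w', v') \<in> R))"

definition downward_confluent :: "'w rel \<Rightarrow> 'w rel \<Rightarrow> bool" where
  "downward_confluent P R \<longleftrightarrow>
     (\<forall>w v v'. (w, v) \<in> P \<and> (v, v') \<in> R \<longrightarrow> (\<exists>w'. (w, w') \<in> R \<and> (w', v') \<in> P))"

definition sigma_bisim :: "'w model \<Rightarrow> fm set \<Rightarrow> 'w rel \<Rightarrow> bool" where
  "sigma_bisim M S Z \<longleftrightarrow> Z \<subseteq> W M \<times> W M
     \<and> forward_confluent (le M) Z \<and> backward_confluent (le M) Z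
     \<and> (\<forall>w v. (w, v) \<in> Z \<longrightarrow> label M S w = label M S v)"

definition strong_sigma_bisim :: "'w model \<Rightarrow> fm set \<Rightarrow> 'w rel \<Rightarrow> bool" where
  "strong_sigma_bisim M S Z \<longleftrightarrow> sigma_bisim M S Z
     \<and> downward_confluent (le M) Z \<and> downward_confluent (le M) (Z\<inverse>)"

definition quot :: "'w model \<Rightarrow> 'w rel \<Rightarrow> 'w set model" where
  "quot M E = \<lparr> W = W M // E,
     Wb = {E `` {w} | w. w \<in> Wb M},
     le = {(E `` {w}, E `` {v}) | w v. \<exists>w' v'. (w, w') \<in> E \<and> (v, v') \<in> E \<and> (w', v') \<in> le M \<and> w \<in> W M \<and> v \<in> W M},
     sq = ({(E `` {w}, E `` {v}) | w v. \<exists>w' v'. (w, w') \<in> E \<and> (v', v) \<in> E \<and> (w', v') \<in> sq M \<and> w \<in> W M \<and> v \<in> W M})\<^sup>+,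
     V = (\<lambda>p. {E `` {w} | w. w \<in> W M \<and> (\<exists>w'. (w, w') \<in> E \<and> w' \<in> V M p)}) \<rparr>"

end

theory Submission
  imports Defs
begin

text \<open>Since \<open>\<approx>\<close> is an equivalence, the relations of the quotient are just the images
  of \<open>\<preccurlyeq>\<close> and \<open>\<sqsubseteq>\<close> under the class map (the latter closed transitively). To close
  \<open>[w] \<preccurlyeq> [v] \<sqsubseteq> [z]\<close> with \<open>w \<preccurlyeq> v\<close>, \<open>v \<approx> v'\<close>, \<open>v' \<sqsubseteq> z\<close>, downward confluence of \<open>\<approx>\<close>
  moves \<open>w\<close> to some \<open>w' \<approx> w\<close> with \<open>w' \<preccurlyeq> v'\<close>, and downward confluence of \<open>\<sqsubseteq>\<close> then gives
  \<open>w' \<sqsubseteq> w'' \<preccurlyeq> z\<close>. Downward confluence survives transitive closure.\<close>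

lemma downward_confluent_trancl:
  assumes "downward_confluent P R"
  shows "downward_confluent P (R\<^sup>+)"
  unfolding downward_confluent_def
proof (intro allI impI, elim conjE)
  fix w v z
  assume "(v, z) \<in> R\<^sup>+" and "(w, v) \<in> P"
  then show "\<exists>w'. (w, w') \<in> R\<^sup>+ \<and> (w', z) \<in> P"
  proof (induction arbitrary: w rule: trancl_induct)
    case (base z)
    then show ?case using assms unfolding downward_confluent_def by blast
  next
    case (step y z)
    then obtain u where "(w, u) \<in> R\<^sup>+" "(u, y) \<in> P" by blast
    moreover obtain u' where "(u, u') \<in> R" "(u', z) \<in> P"
      using assms \<open>(u, y) \<in> P\<close> \<open>(y, z) \<in> R\<close> unfolding downward_confluent_def by blast
    ultimately show ?case by (meson trancl_into_trancl)
  qed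
qed

definition class_rel :: "'w rel \<Rightarrow> 'w rel \<Rightarrow> 'w set rel" where
  "class_rel E R = {(E `` {w}, E `` {v}) | w v. (w, v) \<in> R}"

lemma downward_confluent_class_rel:
  assumes "equiv A E" and "P \<subseteq> A \<times> A" and "R \<subseteq> A \<times> A"
    and "downward_confluent P E" and "downward_confluent P R"
  shows "downward_confluent (class_rel E P) (class_rel E R)"
  unfolding downward_confluent_def
proof (intro allI impI, elim conjE)
  fix X Y Z
  assume "(X, Y) \<in> class_rel E P" and "(Y, Z) \<in> class_rel E R"
  then obtain w v v' z where X: "X = E `` {w}" and Z: "Z = E `` {z}"
    and "(w, v) \<in> P" "(v', z) \<in> R" and "E `` {v} = E `` {v'}"
    unfolding class_rel_def by blast
  then have "(v, v') \<in> E"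
    using assms(1-3) by (auto simp: equiv_class_eq_iff)
  then obtain w' where "(w, w') \<in> E" "(w', v') \<in> P"
    using assms(4) \<open>(w, v) \<in> P\<close> unfolding downward_confluent_def by blast
  then obtain w'' where "(w', w'') \<in> R" "(w'', z) \<in> P"
    using assms(5) \<open>(v', z) \<in> R\<close> unfolding downward_confluent_def by blast
  have "E `` {w} = E `` {w'}"
    using assms(1) \<open>(w, w') \<in> E\<close> by (rule equiv_class_eq)
  then have "(X, E `` {w''}) \<in> class_rel E R" and "(E `` {w''}, Z) \<in> class_rel E P"
    using X Z \<open>(w', w'') \<in> R\<close> \<open>(w'', z) \<in> P\<close> unfolding class_rel_def by auto
  then show "\<exists>X'. (X, X') \<in> class_rel E R \<and> (X', Z) \<in> class_rel E P" by blast
qed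

lemma saturated_rel_eq_class_rel:
  assumes "equiv A E" and "R \<subseteq> A \<times> A"
  shows "{(E `` {w}, E `` {v}) | w v. \<exists>w' v'. (w, w') \<in> E \<and> (v, v') \<in> E \<and> (w', v') \<in> R
            \<and> w \<in> A \<and> v \<in> A} = class_rel E R"
  unfolding class_rel_def
proof (intro equalityI subsetI)
  fix p
  assume "p \<in> {(E `` {w}, E `` {v}) | w v. \<exists>w' v'. (w, w') \<in> E \<and> (v, v') \<in> E
            \<and> (w', v') \<in> R \<and> w \<in> A \<and> v \<in> A}"
  then obtain w v w' v' where "p = (E `` {w}, E `` {v})" "(w, w') \<in> E" "(v, v') \<in> E" "(w', v') \<in> R"
    by blast
  moreover have "E `` {w} = E `` {w'}" "E `` {v} = E `` {v'}"
    using assms(1) \<open>(w, w') \<in> E\<close> \<open>(v, v') \<in> E\<close> by (simp_all add: equiv_class_eq)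
  ultimately show "p \<in> {(E `` {w}, E `` {v}) | w v. (w, v) \<in> R}" by auto
next
  fix p
  assume "p \<in> {(E `` {w}, E `` {v}) | w v. (w, v) \<in> R}"
  then obtain w v where "p = (E `` {w}, E `` {v})" "(w, v) \<in> R" by blast
  moreover have "w \<in> A" "v \<in> A" "(w, w) \<in> E" "(v, v) \<in> E"
    using assms \<open>(w, v) \<in> R\<close> by (auto simp: equiv_def refl_on_def)
  ultimately show "p \<in> {(E `` {w}, E `` {v}) | w v. \<exists>w' v'. (w, w') \<in> E \<and> (v, v') \<in> E
            \<and> (w', v') \<in> R \<and> w \<in> A \<and> v \<in> A}" by blast
qed

lemma le_quot:
  assumes "bi_model M" and "equiv (W M) E"
  shows "le (quot M E) = class_rel E (le M)"
  using saturated_rel_eq_class_rel[OF assms(2), of "le M"] assms(1)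
  by (simp add: quot_def bi_model_def preorder_on_def)

lemma sq_quot:
  assumes "bi_model M" and "equiv (W M) E"
  shows "sq (quot M E) = (class_rel E (sq M))\<^sup>+"
proof -
  have "(v', v) \<in> E \<longleftrightarrow> (v, v') \<in> E" for v v'
    using assms(2) by (auto simp: equiv_def elim: symE)
  then show ?thesis
    using saturated_rel_eq_class_rel[OF assms(2), of "sq M"] assms(1)
    by (simp add: quot_def bi_model_def preorder_on_def)
qed

theorem mainTheorem14:
  fixes M :: "'w model" and S :: "fm set" and E :: "'w rel"
  assumes "bi_model M"
    and "finite S" and "sub_closed S"
    and "strong_sigma_bisim M S E" and "equiv (W M) E"
    and "downward_confluent (le M) (sq M)"
  shows "downward_confluent (le (quot M E)) (sq (quot M E))"
proof -
  have "le M \<subseteq> W M \<times> W M" and "sq M \<subseteq> W M \<times> W M"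
    using assms(1) by (auto simp: bi_model_def preorder_on_def)
  moreover have "downward_confluent (le M) E"
    using assms(4) by (simp add: strong_sigma_bisim_def)
  ultimately have "downward_confluent (class_rel E (le M)) (class_rel E (sq M))"
    using downward_confluent_class_rel[OF assms(5) _ _ _ assms(6)] by blast
  then show ?thesis
    using assms(1,5) by (simp add: le_quot sq_quot downward_confluent_trancl)
qed

end
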